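(* Let $\{(Y_i,X_i^T)\}_{i=1}^n$ be i.i.d. copies of $(Y,X^T)$, where $Y$ is real-valued and $X$ takes values in a support $\mathcal{X}\subset\mathbb{R}^{\dim X}$, and let $g_0(x)=E[Y\mid X=x]$. Let $\mathbf{A}_0$ be a known linear operator mapping functions on $\mathcal{X}$ to real-valued functions on a set $\mathcal{W}_0$, and $\mathbf{A}_1$ a known linear operator mapping functions on $\mathcal{X}$ to real-valued functions on a set $\mathcal{W}_1$; put $\theta_0=\mathbf{A}_0g_0$. Let $p_{1:k}=(p_1,\dots,p_k)^T$ be functions on $\mathcal{X}$ ($k\ge 2$), assume $E[p_{1:k}(X)p_{1:k}(X)^T]$ is invertible, and let $\bar\beta=E[p_{1:k}(X)p_{1:k}(X)^T]^{-1}E[p_{1:k}(X)Y]$. Assume there are known functions $\delta_0$ on $\mathcal{W}_0$ and $\delta_1$ on $\mathcal{W}_1$ with $|[\mathbf{A}_0(g_0-p_{1:k}^T\bar\beta)](w_0)|\le\delta_0(w_0)$ for all $w_0\in\mathcal{W}_0$ and $|[\mathbf{A}_1(g_0-p_{1:k}^T\bar\beta)](w_1)|\le\delta_1(w_1)$ for all $w_1\in\mathcal{W}_1$. Define $\hat\omega=p_{1:k}(X)\bigl(Y-p_{1:k}(X)^TE_n[p_{1:k}(X)p_{1:k}(X)^T]^{-1}E_n[p_{1:k}(X)Y]\bigr)$ (computed for each observation), let $\eta_1,\dots,\eta_n$ be i.i.d. Rademacher variables independent of the data, and let $cv$ be the $(1-\alpha)$ quantile, conditional on the data, of $\|E_n[\hat\omega\hat\omega^T]^{-1/2}E_n[\eta\hat\omega]\|_\infty$.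 Consider the constraints on $\beta\in\mathbb{R}^k$: (C1) $\|E_n[\hat\omega\hat\omega^T]^{-1/2}E_n[p_{1:k}(X)(Y-p_{1:k}(X)^T\beta)]\|_\infty\le cv$; (C3) $[\mathbf{A}_1p_{1:k}^T](w_1)\beta\le\delta_1(w_1)$ for every $w_1\in\mathcal{W}_1$; and let $CR_\theta$ be the set of functions $\theta:\mathcal{W}_0\to\mathbb{R}$ for which there exists $\beta\in\mathbb{R}^k$ satisfying (C1), (C3), and $|[\mathbf{A}_0p_{1:k}^T](w_0)\beta-\theta(w_0)|\le\delta_0(w_0)$ for every $w_0\in\mathcal{W}_0$. Then for every $w_0\in\mathcal{W}_0$, the projection $\{\theta(w_0):\theta\in CR_\theta\}$ equals the closed interval $$\Bigl[\min_{\beta\ \text{s.t. (C1),(C3)}}[\mathbf{A}_0p_{1:k}^T](w_0)\beta-\delta_0(w_0),\ \max_{\beta\ \text{s.t. (C1),(C3)}}[\mathbf{A}_0p_{1:k}^T](w_0)\beta+\delta_0(w_0)\Bigr].$$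
   Context: $E_n$ denotes the sample mean: $E_n[f(Y,X^T)]=\frac1n\sum_{i=1}^nf(Y_i,X_i^T)$, and $E_n[\eta\hat\omega]=\frac1n\sum_i\eta_i\hat\omega_i$. The notation $[\mathbf{A}_jp_{1:k}^T](w)\beta$ means $[\mathbf{A}_j(p_{1:k}^T\beta)](w)$ for $j=0,1$. $\|\cdot\|_\infty$ is the sup-norm of a vector in $\mathbb{R}^k$. The constraints (C1) and (C3) are linear in $\beta$, so the endpoints are values of linear programs. *)

theory Defs
  imports "HOL-Probability.Probability"
begin

definition En :: "nat \<Rightarrow> (nat \<Rightarrow> real) \<Rightarrow> real" where
  "En n f = (\<Sum>i<n. f i) / real n"

definition lin_op :: "(('x \<Rightarrow> real) \<Rightarrow> ('w \<Rightarrow> real)) \<Rightarrow> bool" where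
  "lin_op A \<longleftrightarrow> (\<forall>a b f g. A (\<lambda>x. a * f x + b * g x) = (\<lambda>w. a * A f w + b * A g w))"

definition sgram :: "nat \<Rightarrow> ('x \<Rightarrow> real^'k) \<Rightarrow> (nat \<Rightarrow> 'x) \<Rightarrow> real^'k^'k" where
  "sgram n p Xs = (\<chi> a b. En n (\<lambda>i. p (Xs i) $ a * p (Xs i) $ b))"

definition smoment :: "nat \<Rightarrow> ('x \<Rightarrow> real^'k) \<Rightarrow> (nat \<Rightarrow> real) \<Rightarrow> (nat \<Rightarrow> 'x) \<Rightarrow> real^'k \<Rightarrow> real^'k" where
  "smoment n p Ys Xs \<beta> = (\<chi> a. En n (\<lambda>i. p (Xs i) $ a * (Ys i - p (Xs i) \<bullet> \<beta>)))"

definition scross :: "nat \<Rightarrow> ('x \<Rightarrow> real^'k) \<Rightarrow> (nat \<Rightarrow> real) \<Rightarrow> (nat \<Rightarrow> 'x) \<Rightarrow> real^'k" where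
  "scross n p Ys Xs = (\<chi> a. En n (\<lambda>i. p (Xs i) $ a * Ys i))"

definition omega_hat :: "nat \<Rightarrow> ('x \<Rightarrow> real^'k) \<Rightarrow> (nat \<Rightarrow> real) \<Rightarrow> (nat \<Rightarrow> 'x) \<Rightarrow> nat \<Rightarrow> real^'k" where
  "omega_hat n p Ys Xs i =
     (Ys i - p (Xs i) \<bullet> (matrix_inv (sgram n p Xs) *v scross n p Ys Xs)) *\<^sub>R p (Xs i)"

definition outer_mean :: "nat \<Rightarrow> (nat \<Rightarrow> real^'k) \<Rightarrow> real^'k^'k" where
  "outer_mean n w = (\<chi> a b. En n (\<lambda>i. w i $ a * w i $ b))"

definition inv_sqrt :: "real^'k^'k \<Rightarrow> real^'k^'k" where
  "inv_sqrt M = (THE S. transpose S = S \<and> (\<forall>x. x \<noteq> 0 \<longrightarrow> 0 < x \<bullet> (S *v x))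
                     \<and> S ** S = matrix_inv M)"

text \<open>Realisations of n i.i.d. Rademacher signs (each equally likely, conditionally on data).\<close>
definition rademacher_signs :: "nat \<Rightarrow> (nat \<Rightarrow> real) set" where
  "rademacher_signs n = PiE {..<n} (\<lambda>_. {-1, 1})"

definition boot_stat :: "nat \<Rightarrow> real^'k^'k \<Rightarrow> (nat \<Rightarrow> real^'k) \<Rightarrow> (nat \<Rightarrow> real) \<Rightarrow> real" where
  "boot_stat n S w \<eta> = infnorm (S *v (\<chi> a. En n (\<lambda>i. \<eta> i * w i $ a)))"

definition cond_quantile :: "nat \<Rightarrow> real \<Rightarrow> ((nat \<Rightarrow> real) \<Rightarrow> real) \<Rightarrow> real" where
  "cond_quantile n \<alpha> T =
     Inf {c. (1 - \<alpha>) * real (card (rademacher_signs n))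
             \<le> real (card {\<eta> \<in> rademacher_signs n. T \<eta> \<le> c})}"

definition crit_val :: "nat \<Rightarrow> real \<Rightarrow> ('x \<Rightarrow> real^'k) \<Rightarrow> (nat \<Rightarrow> real) \<Rightarrow> (nat \<Rightarrow> 'x) \<Rightarrow> real" where
  "crit_val n \<alpha> p Ys Xs =
     cond_quantile n \<alpha>
       (boot_stat n (inv_sqrt (outer_mean n (omega_hat n p Ys Xs))) (omega_hat n p Ys Xs))"

definition feasible ::
  "nat \<Rightarrow> real \<Rightarrow> ('x \<Rightarrow> real^'k) \<Rightarrow> (nat \<Rightarrow> real) \<Rightarrow> (nat \<Rightarrow> 'x)
   \<Rightarrow> (('x \<Rightarrow> real) \<Rightarrow> ('w1 \<Rightarrow> real)) \<Rightarrow> 'w1 set \<Rightarrow> ('w1 \<Rightarrow> real) \<Rightarrow> (real^'k) set" where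
  "feasible n \<alpha> p Ys Xs A1 W1 \<delta>1 =
     {\<beta>. infnorm (inv_sqrt (outer_mean n (omega_hat n p Ys Xs)) *v smoment n p Ys Xs \<beta>)
            \<le> crit_val n \<alpha> p Ys Xs
        \<and> (\<forall>w\<in>W1. A1 (\<lambda>x. p x \<bullet> \<beta>) w \<le> \<delta>1 w)}"

definition CR_theta ::
  "nat \<Rightarrow> real \<Rightarrow> ('x \<Rightarrow> real^'k) \<Rightarrow> (nat \<Rightarrow> real) \<Rightarrow> (nat \<Rightarrow> 'x)
   \<Rightarrow> (('x \<Rightarrow> real) \<Rightarrow> ('w0 \<Rightarrow> real)) \<Rightarrow> 'w0 set \<Rightarrow> ('w0 \<Rightarrow> real)
   \<Rightarrow> (('x \<Rightarrow> real) \<Rightarrow> ('w1 \<Rightarrow> real)) \<Rightarrow> 'w1 set \<Rightarrow> ('w1 \<Rightarrow> real) \<Rightarrow> ('w0 \<Rightarrow> real) set" where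
  "CR_theta n \<alpha> p Ys Xs A0 W0 \<delta>0 A1 W1 \<delta>1 =
     {\<theta>. \<exists>\<beta>\<in>feasible n \<alpha> p Ys Xs A1 W1 \<delta>1.
            \<forall>w\<in>W0. \<bar>A0 (\<lambda>x. p x \<bullet> \<beta>) w - \<theta> w\<bar> \<le> \<delta>0 w}"

end

theory Submission
  imports Defs
begin

text \<open>The feasible set of (C1) and (C3) is convex: (C1) pulls a sup-norm ball back along the
  affine map \<open>\<beta> \<mapsto> S (E\<^sub>n[p Y] - E\<^sub>n[p p\<^sup>T] \<beta>)\<close>, and (C3) is an intersection of half-spaces
  because \<open>\<beta> \<mapsto> [A\<^sub>1 p\<^sup>T](w) \<beta>\<close> is linear. As \<open>\<beta> \<mapsto> [A\<^sub>0 p\<^sup>T](w\<^sub>0) \<beta>\<close> is linear too, it maps the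
  feasible set onto a convex subset of the line, i.e. onto the interval between its minimum and
  maximum. The projection of \<open>CR\<^sub>\<theta>\<close> at \<open>w\<^sub>0\<close> is that interval widened by \<open>\<delta>\<^sub>0(w\<^sub>0)\<close>: away
  from \<open>w\<^sub>0\<close> a member \<open>\<theta>\<close> can simply follow \<open>[A\<^sub>0 p\<^sup>T] \<beta>\<close>, which is admissible since
  \<open>\<delta>\<^sub>0 \<ge> 0\<close> by the bias bound. That is the only hypothesis about the data-generating process
  the argument uses: the statement is a deterministic fact about each sample.\<close>

lemma convex_infnorm_affine_sublevel:
  fixes g :: "'a::real_vector \<Rightarrow> 'b::euclidean_space"
  assumes "linear g"
  shows "convex {x. infnorm (c - g x) \<le> r}"
proof (rule convexI)
  fix x y and u v :: real
  assume x: "x \<in> {x. infnorm (c - g x) \<le> r}" and y: "y \<in> {x. infnorm (c - g x) \<le> r}"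
    and uv: "0 \<le> u" "0 \<le> v" "u + v = 1"
  have "c - g (u *\<^sub>R x + v *\<^sub>R y) = u *\<^sub>R (c - g x) + v *\<^sub>R (c - g y)"
    using uv(3) by (simp add: linear_add[OF assms] linear_scale[OF assms] algebra_simps
        flip: scaleR_add_left)
  then have "infnorm (c - g (u *\<^sub>R x + v *\<^sub>R y)) \<le> u * infnorm (c - g x) + v * infnorm (c - g y)"
    using uv infnorm_triangle[of "u *\<^sub>R (c - g x)" "v *\<^sub>R (c - g y)"] by (simp add: infnorm_mul)
  also have "\<dots> \<le> u * r + v * r"
    using x y uv by (intro add_mono mult_left_mono) auto
  finally show "u *\<^sub>R x + v *\<^sub>R y \<in> {x. infnorm (c - g x) \<le> r}"
    using uv(3) by (simp flip: distrib_right)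
qed

lemma convex_linear_sublevel:
  fixes f :: "'a::real_vector \<Rightarrow> real"
  assumes "linear f"
  shows "convex {x. f x \<le> b}"
  using convex_linear_vimage[OF assms, of "{..b}"] by (simp add: vimage_def)

lemma linear_lin_op_coeffs:
  fixes p :: "'x \<Rightarrow> 'a::real_inner"
  assumes "lin_op A"
  shows "linear (\<lambda>\<beta>. A (\<lambda>x. p x \<bullet> \<beta>) w)"
proof (rule linearI)
  fix \<beta> \<gamma> :: 'a and r :: real
  have "A (\<lambda>x. 1 * (p x \<bullet> \<beta>) + 1 * (p x \<bullet> \<gamma>)) w = 1 * A (\<lambda>x. p x \<bullet> \<beta>) w + 1 * A (\<lambda>x. p x \<bullet> \<gamma>) w"
    using assms unfolding lin_op_def by metis
  then show "A (\<lambda>x. p x \<bullet> (\<beta> + \<gamma>)) w = A (\<lambda>x. p x \<bullet> \<beta>) w + A (\<lambda>x. p x \<bullet> \<gamma>) w"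
    by (simp add: inner_add_right)
  have "A (\<lambda>x. r * (p x \<bullet> \<beta>) + 0 * (p x \<bullet> \<beta>)) w = r * A (\<lambda>x. p x \<bullet> \<beta>) w + 0 * A (\<lambda>x. p x \<bullet> \<beta>) w"
    using assms unfolding lin_op_def by metis
  then show "A (\<lambda>x. p x \<bullet> (r *\<^sub>R \<beta>)) w = r *\<^sub>R A (\<lambda>x. p x \<bullet> \<beta>) w"
    by simp
qed

lemma smoment_eq_scross_minus_sgram:
  "smoment n p Ys Xs \<beta> = scross n p Ys Xs - sgram n p Xs *v \<beta>"
proof -
  have "(sgram n p Xs *v \<beta>) $ a = En n (\<lambda>i. p (Xs i) $ a * (p (Xs i) \<bullet> \<beta>))" for a
  proof -
    have "(sgram n p Xs *v \<beta>) $ a = (\<Sum>b\<in>UNIV. \<Sum>i<n. p (Xs i) $ a * p (Xs i) $ b * \<beta> $ b) / real n"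
      by (simp add: sgram_def matrix_vector_mult_def En_def sum_divide_distrib sum_distrib_right)
    also have "\<dots> = (\<Sum>i<n. \<Sum>b\<in>UNIV. p (Xs i) $ a * (p (Xs i) $ b * \<beta> $ b)) / real n"
      by (subst sum.swap) (simp add: mult.assoc)
    also have "\<dots> = En n (\<lambda>i. p (Xs i) $ a * (p (Xs i) \<bullet> \<beta>))"
      by (simp add: En_def inner_vec_def sum_distrib_left)
    finally show ?thesis .
  qed
  then show ?thesis
    by (simp add: vec_eq_iff smoment_def scross_def En_def right_diff_distrib sum_subtractf
        diff_divide_distrib)
qed

lemma convex_feasible:
  assumes "lin_op A1"
  shows "convex (feasible n \<alpha> p Ys Xs A1 W1 \<delta>1)"
proof -
  define S where "S = inv_sqrt (outer_mean n (omega_hat n p Ys Xs))"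
  have "S *v smoment n p Ys Xs \<beta> = S *v scross n p Ys Xs - (S ** sgram n p Xs) *v \<beta>" for \<beta>
    by (simp add: smoment_eq_scross_minus_sgram matrix_vector_mult_diff_distrib
        matrix_vector_mul_assoc)
  then have "feasible n \<alpha> p Ys Xs A1 W1 \<delta>1 =
      {\<beta>. infnorm (S *v scross n p Ys Xs - (S ** sgram n p Xs) *v \<beta>) \<le> crit_val n \<alpha> p Ys Xs}
      \<inter> (\<Inter>w\<in>W1. {\<beta>. A1 (\<lambda>x. p x \<bullet> \<beta>) w \<le> \<delta>1 w})"
    unfolding feasible_def S_def by auto
  then show ?thesis
    by (simp add: convex_Int convex_INT convex_infnorm_affine_sublevel convex_linear_sublevel
        linear_lin_op_coeffs[OF assms])
qed

lemma linear_image_convex_eq_atLeastAtMost: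
  fixes f :: "'a::real_vector \<Rightarrow> real"
  assumes "linear f" "convex F" "lo \<in> F" "hi \<in> F"
    and "\<forall>\<beta>\<in>F. f lo \<le> f \<beta> \<and> f \<beta> \<le> f hi"
  shows "f ` F = {f lo..f hi}"
proof
  show "f ` F \<subseteq> {f lo..f hi}" using assms(5) by auto
  have "is_interval (f ` F)"
    using convex_linear_image[OF assms(1,2)] by (simp only: is_interval_convex_1)
  moreover have "f lo \<in> f ` F" "f hi \<in> f ` F"
    using assms(3,4) by simp_all
  ultimately show "{f lo..f hi} \<subseteq> f ` F"
    unfolding is_interval_1 by auto
qed

lemma projection_CR_theta:
  assumes "w0 \<in> W0" "\<forall>w\<in>W0. 0 \<le> \<delta>0 w"
  shows "(\<lambda>\<theta>. \<theta> w0) ` CR_theta n \<alpha> p Ys Xs A0 W0 \<delta>0 A1 W1 \<delta>1 =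
    (\<Union>\<beta>\<in>feasible n \<alpha> p Ys Xs A1 W1 \<delta>1.
       {A0 (\<lambda>x. p x \<bullet> \<beta>) w0 - \<delta>0 w0 .. A0 (\<lambda>x. p x \<bullet> \<beta>) w0 + \<delta>0 w0})"
    (is "?lhs = ?rhs")
proof
  show "?lhs \<subseteq> ?rhs"
    using assms(1) unfolding CR_theta_def by (fastforce simp: abs_le_iff)
next
  show "?rhs \<subseteq> ?lhs"
  proof
    fix c assume "c \<in> ?rhs"
    then obtain \<beta> where \<beta>: "\<beta> \<in> feasible n \<alpha> p Ys Xs A1 W1 \<delta>1"
      and c: "\<bar>A0 (\<lambda>x. p x \<bullet> \<beta>) w0 - c\<bar> \<le> \<delta>0 w0"
      by (auto simp: abs_le_iff)
    have "(A0 (\<lambda>x. p x \<bullet> \<beta>))(w0 := c) \<in> CR_theta n \<alpha> p Ys Xs A0 W0 \<delta>0 A1 W1 \<delta>1"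
      unfolding CR_theta_def using \<beta> c assms(2) by auto
    then show "c \<in> ?lhs" by (rule image_eqI[rotated]) simp
  qed
qed

lemma Union_atLeastAtMost_widen:
  fixes a b d :: real
  assumes "a \<le> b" "0 \<le> d"
  shows "(\<Union>y\<in>{a..b}. {y - d..y + d}) = {a - d..b + d}"
proof
  show "{a - d..b + d} \<subseteq> (\<Union>y\<in>{a..b}. {y - d..y + d})"
  proof
    fix c assume "c \<in> {a - d..b + d}"
    then have "max a (min b c) \<in> {a..b}" "c \<in> {max a (min b c) - d..max a (min b c) + d}"
      using assms by auto
    then show "c \<in> (\<Union>y\<in>{a..b}. {y - d..y + d})" by blast
  qed
qed auto

theorem theorem1:
  fixes M :: "'a measure"
    and Y :: "'a \<Rightarrow> real" and X :: "'a \<Rightarrow> real^'d"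
    and Ys :: "nat \<Rightarrow> 'a \<Rightarrow> real" and Xs :: "nat \<Rightarrow> 'a \<Rightarrow> real^'d"
    and n :: nat and \<alpha> :: real
    and \<X> :: "(real^'d) set"
    and g0 :: "real^'d \<Rightarrow> real"
    and p :: "real^'d \<Rightarrow> real^'k::finite"
    and A0 :: "(real^'d \<Rightarrow> real) \<Rightarrow> ('w0 \<Rightarrow> real)" and W0 :: "'w0 set" and \<delta>0 :: "'w0 \<Rightarrow> real"
    and A1 :: "(real^'d \<Rightarrow> real) \<Rightarrow> ('w1 \<Rightarrow> real)" and W1 :: "'w1 set" and \<delta>1 :: "'w1 \<Rightarrow> real"
    and \<omega> :: 'a and w0 :: 'w0 and \<beta>lo \<beta>hi :: "real^'k"
  assumes ps: "prob_space M"
    and Y_meas: "Y \<in> borel_measurable M" and X_meas: "X \<in> borel_measurable M"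
    and Y_int: "integrable M Y"
    and X_supp: "\<forall>\<omega>'\<in>space M. X \<omega>' \<in> \<X>"
    and iid_meas: "\<forall>i<n. Ys i \<in> borel_measurable M \<and> Xs i \<in> borel_measurable M"
    and iid_indep: "prob_space.indep_vars M (\<lambda>_. borel) (\<lambda>i \<omega>'. (Ys i \<omega>', Xs i \<omega>')) {..<n}"
    and iid_dist: "\<forall>i<n. distr M borel (\<lambda>\<omega>'. (Ys i \<omega>', Xs i \<omega>')) = distr M borel (\<lambda>\<omega>'. (Y \<omega>', X \<omega>'))"
    and g0_meas: "g0 \<in> borel_measurable borel"
    and g0_ce: "AE \<omega>' in M. g0 (X \<omega>') = real_cond_exp M (vimage_algebra (space M) X borel) Y \<omega>'"
    and A0_lin: "lin_op A0" and A1_lin: "lin_op A1"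
    and k2: "CARD('k) \<ge> 2"
    and pp_int: "\<forall>a b. integrable M (\<lambda>\<omega>'. p (X \<omega>') $ a * p (X \<omega>') $ b)"
    and pY_int: "\<forall>a. integrable M (\<lambda>\<omega>'. p (X \<omega>') $ a * Y \<omega>')"
    and G_inv: "invertible (\<chi> a b. prob_space.expectation M (\<lambda>\<omega>'. p (X \<omega>') $ a * p (X \<omega>') $ b))"
    and bias0: "\<forall>w\<in>W0. \<bar>A0 (\<lambda>x. g0 x - p x \<bullet>
        (matrix_inv (\<chi> a b. prob_space.expectation M (\<lambda>\<omega>'. p (X \<omega>') $ a * p (X \<omega>') $ b))
          *v (\<chi> a. prob_space.expectation M (\<lambda>\<omega>'. p (X \<omega>') $ a * Y \<omega>')))) w\<bar> \<le> \<delta>0 w"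
    and bias1: "\<forall>w\<in>W1. \<bar>A1 (\<lambda>x. g0 x - p x \<bullet>
        (matrix_inv (\<chi> a b. prob_space.expectation M (\<lambda>\<omega>'. p (X \<omega>') $ a * p (X \<omega>') $ b))
          *v (\<chi> a. prob_space.expectation M (\<lambda>\<omega>'. p (X \<omega>') $ a * Y \<omega>')))) w\<bar> \<le> \<delta>1 w"
    and alpha: "0 < \<alpha>" "\<alpha> < 1"
    and \<omega>_in: "\<omega> \<in> space M"
    and w0_in: "w0 \<in> W0"
    and lo: "\<beta>lo \<in> feasible n \<alpha> p (\<lambda>i. Ys i \<omega>) (\<lambda>i. Xs i \<omega>) A1 W1 \<delta>1"
            "\<forall>\<beta>\<in>feasible n \<alpha> p (\<lambda>i. Ys i \<omega>) (\<lambda>i. Xs i \<omega>) A1 W1 \<delta>1.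
               A0 (\<lambda>x. p x \<bullet> \<beta>lo) w0 \<le> A0 (\<lambda>x. p x \<bullet> \<beta>) w0"
    and hi: "\<beta>hi \<in> feasible n \<alpha> p (\<lambda>i. Ys i \<omega>) (\<lambda>i. Xs i \<omega>) A1 W1 \<delta>1"
            "\<forall>\<beta>\<in>feasible n \<alpha> p (\<lambda>i. Ys i \<omega>) (\<lambda>i. Xs i \<omega>) A1 W1 \<delta>1.
               A0 (\<lambda>x. p x \<bullet> \<beta>) w0 \<le> A0 (\<lambda>x. p x \<bullet> \<beta>hi) w0"
  shows "(\<lambda>\<theta>. \<theta> w0) ` CR_theta n \<alpha> p (\<lambda>i. Ys i \<omega>) (\<lambda>i. Xs i \<omega>) A0 W0 \<delta>0 A1 W1 \<delta>1
         = {A0 (\<lambda>x. p x \<bullet> \<beta>lo) w0 - \<delta>0 w0 .. A0 (\<lambda>x. p x \<bullet> \<beta>hi) w0 + \<delta>0 w0}"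
proof -
  let ?F = "feasible n \<alpha> p (\<lambda>i. Ys i \<omega>) (\<lambda>i. Xs i \<omega>) A1 W1 \<delta>1"
  let ?f = "\<lambda>\<beta>. A0 (\<lambda>x. p x \<bullet> \<beta>) w0"
  have \<delta>0_nonneg: "\<forall>w\<in>W0. 0 \<le> \<delta>0 w"
    using bias0 by (meson abs_ge_zero order_trans)
  have range: "?f ` ?F = {?f \<beta>lo..?f \<beta>hi}"
    using linear_image_convex_eq_atLeastAtMost[OF linear_lin_op_coeffs[OF A0_lin]
        convex_feasible[OF A1_lin] lo(1) hi(1)] lo(2) hi(2) by blast
  have "?f \<beta>lo \<le> ?f \<beta>hi"
    using lo(2) hi(1) by blast
  then have "(\<Union>y\<in>?f ` ?F. {y - \<delta>0 w0..y + \<delta>0 w0}) = {?f \<beta>lo - \<delta>0 w0..?f \<beta>hi + \<delta>0 w0}"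
    unfolding range using \<delta>0_nonneg w0_in by (simp add: Union_atLeastAtMost_widen)
  then show ?thesis
    by (simp add: projection_CR_theta[OF w0_in \<delta>0_nonneg])
qed

end
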